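(* Let $\operatorname{Hank}_n(\mathbb{C})$ be the space of $n\times n$ complex Hankel matrices. Let $\mu_h\in\operatorname{Hank}_n(\mathbb{C})^*\otimes(\mathbb{C}^n)^*\otimes\mathbb{C}^n$ be the structure tensor of the Hankel matrix-vector product $(H,v)\mapsto Hv$. Then $\operatorname{rank}(\mu_h)=\underline{\operatorname{rank}}(\mu_h)=2n-1$. Moreover, let $\mu_H\in\operatorname{Hank}_n(\mathbb{C})^*\otimes\operatorname{Hank}_n(\mathbb{C})^*\otimes\mathbb{C}^{n\times n}$ be the structure tensor of the Hankel matrix-Hankel matrix product $(H,K)\mapsto HK$. Then $\operatorname{rank}(\mu_H)\le n(2n-1)$.
   Context: A Hankel matrix is a square matrix whose $(i,j)$ entry depends only on $i+j$. Structure tensor of a bilinear map $\beta:U\times V\to W$: the unique $\mu_\beta\in U^*\otimes V^*\otimes W$ with $\beta(u,v)=\mu_\beta(u,v,\cdot)$. Rank: least number of decomposable tensors summing to the tensor; border rank: least $r$ such that it is a limit of tensors of rank at most $r$. *)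

theory Defs
  imports "HOL-Analysis.Analysis"
begin

text \<open>Vectors in C^m are represented as functions nat => complex (only indices < m matter).
  A 3-tensor in C^a (x) C^b (x) C^c is a function nat => nat => nat => complex,
  only indices i < a, j < b, k < c being relevant.\<close>

definition unit_vec :: "nat \<Rightarrow> nat \<Rightarrow> complex" where
  "unit_vec i = (\<lambda>t. if t = i then 1 else 0)"

definition structure_tensor ::
  "((nat \<Rightarrow> complex) \<Rightarrow> (nat \<Rightarrow> complex) \<Rightarrow> (nat \<Rightarrow> complex)) \<Rightarrow> nat \<Rightarrow> nat \<Rightarrow> nat \<Rightarrow> complex" where
  "structure_tensor \<beta> i j k = \<beta> (unit_vec i) (unit_vec j) k"

definition rank_le :: "nat \<Rightarrow> nat \<Rightarrow> nat \<Rightarrow> (nat \<Rightarrow> nat \<Rightarrow> nat \<Rightarrow> complex) \<Rightarrow> nat \<Rightarrow> bool" where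
  "rank_le a b c T r \<longleftrightarrow>
     (\<exists>u v w :: nat \<Rightarrow> nat \<Rightarrow> complex.
        \<forall>i<a. \<forall>j<b. \<forall>k<c. T i j k = (\<Sum>l<r. u l i * v l j * w l k))"

definition tensor_rank :: "nat \<Rightarrow> nat \<Rightarrow> nat \<Rightarrow> (nat \<Rightarrow> nat \<Rightarrow> nat \<Rightarrow> complex) \<Rightarrow> nat" where
  "tensor_rank a b c T = (LEAST r. rank_le a b c T r)"

text \<open>Border rank: least r such that T is a limit (in the Euclidean topology of the
  finite-dimensional space C^a (x) C^b (x) C^c, i.e. coordinatewise) of tensors of rank <= r.\<close>
definition border_rank :: "nat \<Rightarrow> nat \<Rightarrow> nat \<Rightarrow> (nat \<Rightarrow> nat \<Rightarrow> nat \<Rightarrow> complex) \<Rightarrow> nat" where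
  "border_rank a b c T = (LEAST r. \<exists>S :: nat \<Rightarrow> nat \<Rightarrow> nat \<Rightarrow> nat \<Rightarrow> complex.
      (\<forall>m. rank_le a b c (S m) r) \<and>
      (\<forall>i<a. \<forall>j<b. \<forall>k<c. (\<lambda>m. S m i j k) \<longlonglongrightarrow> T i j k))"

text \<open>Hank_n(C) is identified with C^(2n-1) via h |-> the Hankel matrix (h_(i+j))_(i,j<n);
  the basis vector e_k corresponds to the Hankel matrix with ones on the k-th antidiagonal.\<close>
definition hankel :: "(nat \<Rightarrow> complex) \<Rightarrow> nat \<Rightarrow> nat \<Rightarrow> complex" where
  "hankel h = (\<lambda>i j. h (i + j))"

definition hankel_vec_prod :: "nat \<Rightarrow> (nat \<Rightarrow> complex) \<Rightarrow> (nat \<Rightarrow> complex) \<Rightarrow> (nat \<Rightarrow> complex)" where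
  "hankel_vec_prod n h v = (\<lambda>i. \<Sum>j<n. hankel h i j * v j)"

text \<open>Hankel matrix-Hankel matrix product (H, K) |-> H K, with C^(n x n) identified with
  C^(n*n) via entry (i,j) |-> coordinate i*n + j.\<close>
definition hankel_hankel_prod :: "nat \<Rightarrow> (nat \<Rightarrow> complex) \<Rightarrow> (nat \<Rightarrow> complex) \<Rightarrow> (nat \<Rightarrow> complex)" where
  "hankel_hankel_prod n h g = (\<lambda>p. \<Sum>t<n. hankel h (p div n) t * hankel g t (p mod n))"

end

theory Submission imports Defs "Jordan_Normal_Form.Determinant" begin

text \<open>
  The structure tensor of the Hankel matrix-vector product is the convolution tensor, with
  coefficient \<open>[i = j + k]\<close> at \<open>e\<^sub>i \<otimes> f\<^sub>j \<otimes> g\<^sub>k\<close>.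
  Over the \<open>N\<close>-th roots of unity, \<open>N = 2n - 1\<close>, the discrete Fourier transform diagonalises
  convolution, which writes it as a sum of \<open>N\<close> decomposable tensors. Conversely, the flattening
  \<open>\<complex>\<^sup>n \<otimes> \<complex>\<^sup>n \<rightarrow> \<complex>\<^sup>N\<close> restricted to the \<open>N\<close> pairs \<open>(j, k)\<close> with \<open>j + k = i'\<close> is the identity matrix;
  a tensor of rank \<open>r < N\<close> has all \<open>N \<times> N\<close> minors of its flattening equal to zero, and so does
  every limit of such tensors, since the determinant is continuous. Finally each column of
  a Hankel-Hankel product is a Hankel-vector product, so the second tensor is a sum of \<open>n\<close>
  copies of the first.
\<close>

definition root_unity :: "nat \<Rightarrow> complex" where
  "root_unity N = exp (2 * of_real pi * \<i> / of_nat N)"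

lemma root_unity_pow: "root_unity N ^ m = exp (2 * of_real pi * \<i> * of_nat m / of_nat N)"
  unfolding root_unity_def by (metis exp_of_nat_mult times_divide_eq_right mult.commute)

lemma root_unity_pow_eq_1_iff: "N \<ge> 1 \<Longrightarrow> root_unity N ^ m = 1 \<longleftrightarrow> N dvd m"
  using root_unity_pow complex_root_unity_eq_1 by metis

lemma sum_root_unity_pow:
  assumes "N \<ge> 1"
  shows "(\<Sum>l<N. root_unity N ^ (l * m)) = (if N dvd m then of_nat N else 0)"
proof (cases "N dvd m")
  case True
  then have "root_unity N ^ (l * m) = 1" for l by (simp add: root_unity_pow_eq_1_iff[OF assms])
  then show ?thesis using True by simp
next
  case False
  let ?z = "root_unity N ^ m"
  have "?z \<noteq> 1" using False root_unity_pow_eq_1_iff[OF assms] by simp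
  have "(\<Sum>l<N. root_unity N ^ (l * m)) = (\<Sum>l<N. ?z ^ l)"
    by (intro sum.cong refl) (metis power_mult mult.commute)
  also have "\<dots> = (?z ^ N - 1) / (?z - 1)" using \<open>?z \<noteq> 1\<close> by (simp add: geometric_sum)
  also have "?z ^ N = 1" using root_unity_pow_eq_1_iff[OF assms]
    by (metis dvd_triv_left mult.commute power_mult)
  finally show ?thesis using False by simp
qed

text \<open>The inverse Fourier coefficient \<open>\<omega>\<^sup>-\<^sup>l\<^sup>i / N\<close>, with the negative exponent written as \<open>l (N - i)\<close>.\<close>
definition inverse_dft :: "nat \<Rightarrow> nat \<Rightarrow> nat \<Rightarrow> complex" where
  "inverse_dft N l i = root_unity N ^ (l * (N - i)) / of_nat N"

lemma sum_inverse_dft_root_unity_pow: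
  assumes "i < N" "s < N"
  shows "(\<Sum>l<N. inverse_dft N l i * root_unity N ^ (l * s)) = (if i = s then 1 else 0)"
proof -
  have "N \<ge> 1" using assms by simp
  have "N dvd (N - i + s) \<longleftrightarrow> i = s"
  proof
    assume "N dvd (N - i + s)"
    then obtain q where "N - i + s = N * q" by (elim dvdE)
    moreover have "0 < N - i + s" "N - i + s < N * 2" using assms by auto
    ultimately have "N - i + s = N" by (cases q) (auto simp: mult_less_cancel1)
    then show "i = s" using assms by linarith
  qed (use assms in simp)
  have "(\<Sum>l<N. inverse_dft N l i * root_unity N ^ (l * s))
      = (\<Sum>l<N. root_unity N ^ (l * (N - i + s))) / of_nat N"
    unfolding inverse_dft_def sum_divide_distrib
    by (intro sum.cong refl) (simp add: power_add[symmetric] algebra_simps)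
  then show ?thesis using \<open>N \<ge> 1\<close> \<open>N dvd (N - i + s) \<longleftrightarrow> i = s\<close> by (simp add: sum_root_unity_pow)
qed

lemma tensor_rank_le: "rank_le a b c T r \<Longrightarrow> tensor_rank a b c T \<le> r"
  unfolding tensor_rank_def by (rule Least_le)

lemma rank_le_add:
  assumes "rank_le a b c S r" "rank_le a b c T s"
  shows "rank_le a b c (\<lambda>i j k. S i j k + T i j k) (r + s)"
proof -
  obtain u v w where S: "\<forall>i<a. \<forall>j<b. \<forall>k<c. S i j k = (\<Sum>l<r. u l i * v l j * w l k)"
    using assms(1) unfolding rank_le_def by blast
  obtain u' v' w' where T: "\<forall>i<a. \<forall>j<b. \<forall>k<c. T i j k = (\<Sum>l<s. u' l i * v' l j * w' l k)"
    using assms(2) unfolding rank_le_def by blast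
  have split: "(\<Sum>l<r + s. f l) = (\<Sum>l<r. f l) + (\<Sum>l<s. f (r + l))" for f :: "nat \<Rightarrow> complex"
    by (induction s) auto
  define glue where "glue x y l = (if l < r then x l else y (l - r))"
    for x y :: "nat \<Rightarrow> nat \<Rightarrow> complex" and l
  show ?thesis
    unfolding rank_le_def
    by (rule exI[of _ "glue u u'"], rule exI[of _ "glue v v'"], rule exI[of _ "glue w w'"])
       (simp add: split S T glue_def)
qed

lemma rank_le_sum:
  assumes "\<And>t. t < m \<Longrightarrow> rank_le a b c (T t) r"
  shows "rank_le a b c (\<lambda>i j k. \<Sum>t<m. T t i j k) (m * r)"
  using assms
proof (induction m)
  case 0
  show ?case by (simp add: rank_le_def)
next
  case (Suc m)
  then show ?case
    using rank_le_add[of a b c "\<lambda>i j k. \<Sum>t<m. T t i j k" "m * r" "T m" r] by (simp add: add.commute)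
qed

text \<open>
  A tensor supported on a weighted antidiagonal \<open>i = \<alpha> j + \<beta> k\<close> has rank at most \<open>N\<close>:
  it is the inverse Fourier transform of the product of the transforms of its two slices.
\<close>
lemma rank_le_antidiagonal:
  assumes "\<And>j k. j < b \<Longrightarrow> k < c \<Longrightarrow> x j * y k \<noteq> 0 \<Longrightarrow> \<alpha> j + \<beta> k < N"
    and "\<And>i j k. i < N \<Longrightarrow> j < b \<Longrightarrow> k < c \<Longrightarrow>
           T i j k = (if i = \<alpha> j + \<beta> k then x j * y k else 0)"
  shows "rank_le N b c T N"
  unfolding rank_le_def
proof (intro exI allI impI)
  fix i j k assume ijk: "i < N" "j < b" "k < c"
  let ?\<omega> = "root_unity N"
  have "(\<Sum>l<N. inverse_dft N l i * (x j * ?\<omega> ^ (l * \<alpha> j)) * (y k * ?\<omega> ^ (l * \<beta> k)))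
      = x j * y k * (\<Sum>l<N. inverse_dft N l i * ?\<omega> ^ (l * (\<alpha> j + \<beta> k)))"
    by (simp add: sum_distrib_left power_add algebra_simps)
  also have "\<dots> = T i j k"
  proof (cases "x j * y k = 0")
    case False
    then have "\<alpha> j + \<beta> k < N" using assms(1) ijk by blast
    then show ?thesis using ijk by (simp add: assms(2) sum_inverse_dft_root_unity_pow)
  qed (simp add: assms(2) ijk)
  finally show "T i j k = (\<Sum>l<N. inverse_dft N l i * (x j * ?\<omega> ^ (l * \<alpha> j)) * (y k * ?\<omega> ^ (l * \<beta> k)))"
    by simp
qed

definition flattening_minor ::
  "nat \<Rightarrow> (nat \<Rightarrow> nat \<Rightarrow> nat \<Rightarrow> complex) \<Rightarrow> (nat \<Rightarrow> nat) \<Rightarrow> (nat \<Rightarrow> nat) \<Rightarrow> complex mat" where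
  "flattening_minor N T \<sigma> \<tau> = Matrix.mat N N (\<lambda>(i, i'). T i (\<sigma> i') (\<tau> i'))"

lemma det_flattening_minor_eq_0_if_rank_le:
  assumes "rank_le N b c T r" "r < N" "\<And>i'. i' < N \<Longrightarrow> \<sigma> i' < b \<and> \<tau> i' < c"
  shows "Determinant.det (flattening_minor N T \<sigma> \<tau>) = 0"
proof -
  obtain u v w where uvw: "\<forall>i<N. \<forall>j<b. \<forall>k<c. T i j k = (\<Sum>l<r. u l i * v l j * w l k)"
    using assms(1) unfolding rank_le_def by blast
  define A where "A = Matrix.mat N N (\<lambda>(i, l). if l < r then u l i else 0)"
  define B where "B = Matrix.mat N N (\<lambda>(l, i'). if l < r then v l (\<sigma> i') * w l (\<tau> i') else 0)"
  have "flattening_minor N T \<sigma> \<tau> = A * B"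
  proof (rule eq_matI)
    fix i i' assume "i < dim_row (A * B)" "i' < dim_col (A * B)"
    then have ii': "i < N" "i' < N" by (auto simp: A_def B_def)
    have "(A * B) $$ (i, i') = (\<Sum>l\<in>{0..<N}. A $$ (i, l) * B $$ (l, i'))"
      using ii' by (simp add: A_def B_def scalar_prod_def)
    also have "\<dots> = (\<Sum>l\<in>{0..<N}. if l < r then u l i * (v l (\<sigma> i') * w l (\<tau> i')) else 0)"
      using ii' by (intro sum.cong) (auto simp: A_def B_def)
    also have "\<dots> = (\<Sum>l<r. u l i * (v l (\<sigma> i') * w l (\<tau> i')))"
      by (rule sum.mono_neutral_cong_right) (use assms(2) in auto)
    finally show "flattening_minor N T \<sigma> \<tau> $$ (i, i') = (A * B) $$ (i, i')"
      using uvw ii' assms(3)[OF ii'(2)] by (simp add: flattening_minor_def mult.assoc)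
  qed (auto simp: flattening_minor_def A_def B_def)
  moreover have "Determinant.det B = 0"
  proof -
    \<comment> \<open>the minor factors through \<open>\<complex>\<^sup>r\<close> and \<open>r < N\<close>, so row \<open>N - 1\<close> of \<open>B\<close> vanishes\<close>
    have "B = mat\<^sub>r N N (\<lambda>l. if l = N - 1 then 0\<^sub>v N else row B l)"
      by (rule eq_matI) (use assms(2) in \<open>auto simp: B_def\<close>)
    also have "Determinant.det \<dots> = 0"
    proof (rule det_row_0)
      have "dim_col B = N" by (simp add: B_def)
      then show "(\<lambda>l. row B l) \<in> {0..<N} \<rightarrow> carrier_vec N" using row_carrier by blast
    qed (use assms(2) in simp)
    finally show ?thesis .
  qed
  ultimately show ?thesis
    by (simp add: det_mult[of _ N] A_def B_def)
qed

lemma tendsto_det_flattening_minor: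
  assumes "\<And>i j k. i < N \<Longrightarrow> j < b \<Longrightarrow> k < c \<Longrightarrow> (\<lambda>m. S m i j k) \<longlonglongrightarrow> T i j k"
    and "\<And>i'. i' < N \<Longrightarrow> \<sigma> i' < b \<and> \<tau> i' < c"
  shows "(\<lambda>m. Determinant.det (flattening_minor N (S m) \<sigma> \<tau>)) \<longlonglongrightarrow> Determinant.det (flattening_minor N T \<sigma> \<tau>)"
proof -
  have carrier: "flattening_minor N T \<sigma> \<tau> \<in> carrier_mat N N" for T by (simp add: flattening_minor_def)
  have leibniz: "Determinant.det (flattening_minor N T \<sigma> \<tau>) =
     (\<Sum>p\<in>{p. p permutes {0..<N}}. signof p * (\<Prod>i = 0..<N. T i (\<sigma> (p i)) (\<tau> (p i))))" for T
    unfolding det_def'[OF carrier]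
    by (intro sum.cong refl arg_cong2[where f="(*)"] prod.cong)
       (auto simp: flattening_minor_def permutes_in_image)
  show ?thesis unfolding leibniz
    by (intro tendsto_intros assms) (auto simp: permutes_in_image assms(2))
qed

lemma border_rank_lower_bound_flattening_minor:
  assumes "\<And>m. rank_le N b c (S m) r"
    and "\<And>i j k. i < N \<Longrightarrow> j < b \<Longrightarrow> k < c \<Longrightarrow> (\<lambda>m. S m i j k) \<longlonglongrightarrow> T i j k"
    and "\<And>i'. i' < N \<Longrightarrow> \<sigma> i' < b \<and> \<tau> i' < c"
    and "Determinant.det (flattening_minor N T \<sigma> \<tau>) \<noteq> 0"
  shows "N \<le> r"
proof (rule ccontr)
  assume "\<not> N \<le> r"
  then have "Determinant.det (flattening_minor N (S m) \<sigma> \<tau>) = 0" for m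
    by (intro det_flattening_minor_eq_0_if_rank_le[OF assms(1) _ assms(3)]) simp_all
  moreover have "(\<lambda>m. Determinant.det (flattening_minor N (S m) \<sigma> \<tau>)) \<longlonglongrightarrow> Determinant.det (flattening_minor N T \<sigma> \<tau>)"
    by (rule tendsto_det_flattening_minor[of N b c]) (fact assms(2,3))+
  ultimately have "(\<lambda>m. 0) \<longlonglongrightarrow> Determinant.det (flattening_minor N T \<sigma> \<tau>)"
    by simp
  then show False
    using assms(4) by (simp add: LIMSEQ_const_iff)
qed

lemma structure_tensor_hankel_vec_prod:
  assumes "j < n"
  shows "structure_tensor (hankel_vec_prod n) i j k = (if i = j + k then 1 else 0)"
proof -
  have "structure_tensor (hankel_vec_prod n) i j k
      = (\<Sum>t<n. if t = j then (if k + j = i then 1 else 0) else 0)"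
    unfolding structure_tensor_def hankel_vec_prod_def hankel_def Defs.unit_vec_def
    by (intro sum.cong refl) auto
  then show ?thesis using assms by (simp add: add.commute)
qed

lemma rank_le_hankel_vec_prod:
  "rank_le (2*n - 1) n n (structure_tensor (hankel_vec_prod n)) (2*n - 1)"
  by (rule rank_le_antidiagonal[where x="\<lambda>_. 1" and y="\<lambda>_. 1" and \<alpha>=id and \<beta>=id])
     (auto simp: structure_tensor_hankel_vec_prod)

text \<open>Column \<open>i'\<close> of this minor picks the pair \<open>(j, k)\<close> with \<open>j + k = i'\<close> and \<open>j\<close> maximal.\<close>
lemma flattening_minor_hankel_vec_prod:
  assumes "n \<ge> 1"
  shows "flattening_minor (2*n - 1) (structure_tensor (hankel_vec_prod n))
           (\<lambda>i'. min i' (n - 1)) (\<lambda>i'. i' - min i' (n - 1)) = 1\<^sub>m (2*n - 1)"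
  using assms by (intro eq_matI) (auto simp: flattening_minor_def structure_tensor_hankel_vec_prod)

lemma border_rank_lower_bound_hankel_vec_prod:
  assumes "n \<ge> 1" "\<And>m. rank_le (2*n - 1) n n (S m) r"
    and "\<And>i j k. i < 2*n - 1 \<Longrightarrow> j < n \<Longrightarrow> k < n \<Longrightarrow>
           (\<lambda>m. S m i j k) \<longlonglongrightarrow> structure_tensor (hankel_vec_prod n) i j k"
  shows "2*n - 1 \<le> r"
proof (rule border_rank_lower_bound_flattening_minor[OF assms(2,3)])
  show "Determinant.det (flattening_minor (2*n - 1) (structure_tensor (hankel_vec_prod n))
          (\<lambda>i'. min i' (n - 1)) (\<lambda>i'. i' - min i' (n - 1))) \<noteq> 0"
    unfolding flattening_minor_hankel_vec_prod[OF assms(1)] by simp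
qed (use assms(1) in auto)

lemma tensor_rank_hankel_vec_prod:
  assumes "n \<ge> 1"
  shows "tensor_rank (2*n - 1) n n (structure_tensor (hankel_vec_prod n)) = 2*n - 1"
  unfolding tensor_rank_def
proof (rule Least_equality)
  fix r assume "rank_le (2*n - 1) n n (structure_tensor (hankel_vec_prod n)) r"
  then show "2*n - 1 \<le> r"
    by (intro border_rank_lower_bound_hankel_vec_prod[OF assms]) auto
qed (rule rank_le_hankel_vec_prod)

lemma border_rank_hankel_vec_prod:
  assumes "n \<ge> 1"
  shows "border_rank (2*n - 1) n n (structure_tensor (hankel_vec_prod n)) = 2*n - 1"
  unfolding border_rank_def
proof (rule Least_equality)
  show "\<exists>S. (\<forall>m. rank_le (2*n - 1) n n (S m) (2*n - 1)) \<and>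
      (\<forall>i<2*n - 1. \<forall>j<n. \<forall>k<n. (\<lambda>m. S m i j k) \<longlonglongrightarrow> structure_tensor (hankel_vec_prod n) i j k)"
    using rank_le_hankel_vec_prod by (intro exI[of _ "\<lambda>_. structure_tensor (hankel_vec_prod n)"]) simp
next
  fix r assume "\<exists>S. (\<forall>m. rank_le (2*n - 1) n n (S m) r) \<and>
      (\<forall>i<2*n - 1. \<forall>j<n. \<forall>k<n. (\<lambda>m. S m i j k) \<longlonglongrightarrow> structure_tensor (hankel_vec_prod n) i j k)"
  then show "2*n - 1 \<le> r"
    using border_rank_lower_bound_hankel_vec_prod[OF assms] by blast
qed

lemma structure_tensor_hankel_hankel_prod:
  "structure_tensor (hankel_hankel_prod n) i j p =
    (if p mod n \<le> j \<and> j - p mod n < n \<and> i = p div n + (j - p mod n) then 1 else 0)"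
proof -
  have "structure_tensor (hankel_hankel_prod n) i j p
      = (\<Sum>t<n. if t = j - p mod n then
           (if p mod n \<le> j \<and> i = p div n + (j - p mod n) then 1 else 0) else 0)"
    unfolding structure_tensor_def hankel_hankel_prod_def hankel_def Defs.unit_vec_def
    by (intro sum.cong refl) auto
  then show ?thesis by simp
qed

lemma rank_le_hankel_hankel_prod:
  assumes "n \<ge> 1"
  shows "rank_le (2*n - 1) (2*n - 1) (n*n) (structure_tensor (hankel_hankel_prod n)) (n * (2*n - 1))"
proof -
  define column :: "nat \<Rightarrow> nat \<Rightarrow> nat \<Rightarrow> nat \<Rightarrow> complex" where "column c i j p =
      (if i = (j - c) + p div n \<and> c \<le> j \<and> j - c < n \<and> p mod n = c then 1 else 0)" for c i j p
  have "rank_le (2*n - 1) (2*n - 1) (n*n) (column c) (2*n - 1)" for c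
  proof (rule rank_le_antidiagonal[where \<alpha>="\<lambda>j. j - c" and \<beta>="\<lambda>p. p div n"
        and x="\<lambda>j. if c \<le> j \<and> j - c < n then 1 else 0" and y="\<lambda>p. if p mod n = c then 1 else 0"])
    fix j p assume "p < n * n" and "(if c \<le> j \<and> j - c < n then 1 else 0) * (if p mod n = c then 1 else 0) \<noteq> (0::complex)"
    then have "j - c < n" "p div n < n" by (simp_all add: less_mult_imp_div_less split: if_splits)
    then show "j - c + p div n < 2*n - 1" by linarith
  qed (simp add: column_def)
  then have "rank_le (2*n - 1) (2*n - 1) (n*n) (\<lambda>i j p. \<Sum>c<n. column c i j p) (n * (2*n - 1))"
    by (rule rank_le_sum)
  moreover have "(\<Sum>c<n. column c i j p) = structure_tensor (hankel_hankel_prod n) i j p" for i j p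
  proof -
    have "column c i j p = (if c = p mod n then structure_tensor (hankel_hankel_prod n) i j p else 0)" for c
      by (auto simp: column_def structure_tensor_hankel_hankel_prod)
    then show ?thesis using assms by simp
  qed
  ultimately show ?thesis by simp
qed

theorem mainTheorem11:
  fixes n :: nat
  assumes "n \<ge> 1"
  shows "tensor_rank (2*n - 1) n n (structure_tensor (hankel_vec_prod n)) = 2*n - 1
       \<and> border_rank (2*n - 1) n n (structure_tensor (hankel_vec_prod n)) = 2*n - 1
       \<and> tensor_rank (2*n - 1) (2*n - 1) (n*n) (structure_tensor (hankel_hankel_prod n)) \<le> n * (2*n - 1)"
  using tensor_rank_hankel_vec_prod[OF assms] border_rank_hankel_vec_prod[OF assms]
    tensor_rank_le[OF rank_le_hankel_hankel_prod[OF assms]] by blast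

end
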